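(* Let $g:\mathbb{R}^p\to[-\infty,\infty]$ be a proper nearly convex function and $A\in\mathbb{R}^{p\times n}$ such that $A(\mathbb{R}^n)\cap\operatorname{ri}(\operatorname{dom} g)\neq\emptyset$. Then $(g\circ A)^*(w)=\inf\{g^*(v): v\in\mathbb{R}^p,\ A^Tv=w\}$ for all $w\in\mathbb{R}^n$. Moreover, if $(g\circ A)^*(w)\in\mathbb{R}$, there exists $v\in\mathbb{R}^p$ with $A^Tv=w$ and $(g\circ A)^*(w)=g^*(v)$.
   Context: A set $\Omega$ is nearly convex if there is a convex set $C$ with $C\subset\Omega\subset\overline{C}$; $\operatorname{ri}\Omega=\{a\in\Omega:\exists\delta>0,\ B(a;\delta)\cap\operatorname{aff}\Omega\subset\Omega\}$. A function $g$ is nearly convex if its epigraph is nearly convex, proper if $\operatorname{dom}g=\{g<\infty\}\neq\emptyset$ and $g>-\infty$. Fenchel conjugate: $g^*(v)=\sup_y\{\langle v,y\rangle-g(y)\}$. *)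

theory Defs
  imports "HOL-Analysis.Analysis" "HOL-Library.Extended_Real"
begin

definition nearly_convex_set :: "'a::real_normed_vector set \<Rightarrow> bool" where
  "nearly_convex_set \<Omega> \<longleftrightarrow> (\<exists>C. convex C \<and> C \<subseteq> \<Omega> \<and> \<Omega> \<subseteq> closure C)"

definition ri :: "'a::real_normed_vector set \<Rightarrow> 'a set" where
  "ri \<Omega> = {a \<in> \<Omega>. \<exists>\<delta>>0. ball a \<delta> \<inter> affine hull \<Omega> \<subseteq> \<Omega>}"

definition epi :: "('a \<Rightarrow> ereal) \<Rightarrow> ('a \<times> real) set" where
  "epi g = {(x, \<mu>). g x \<le> ereal \<mu>}"

definition edom :: "('a \<Rightarrow> ereal) \<Rightarrow> 'a set" where
  "edom g = {x. g x < \<infinity>}"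

definition nearly_convex_fun :: "('a::real_normed_vector \<Rightarrow> ereal) \<Rightarrow> bool" where
  "nearly_convex_fun g \<longleftrightarrow> nearly_convex_set (epi g)"

definition proper_fun :: "('a \<Rightarrow> ereal) \<Rightarrow> bool" where
  "proper_fun g \<longleftrightarrow> edom g \<noteq> {} \<and> (\<forall>x. g x > -\<infinity>)"

definition fconj :: "('a::real_inner \<Rightarrow> ereal) \<Rightarrow> 'a \<Rightarrow> ereal" where
  "fconj g v = (SUP y. ereal (v \<bullet> y) - g y)"

end

theory Submission
  imports Defs
begin

text \<open>Weak duality \<open>(g \<circ> A)\<^sup>*(w) \<le> g\<^sup>*(v)\<close> for \<open>A\<^sup>T v = w\<close> is immediate, so the content is
  attainment. If \<open>(g \<circ> A)\<^sup>*(w) = r\<close> is finite, \<open>x \<mapsto> w \<bullet> x - r\<close> minorizes \<open>g \<circ> A\<close>, and the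
  epigraph of \<open>g\<close> (via its convex core) can be separated from the strict hypograph
  \<open>{(A x, \<mu>). \<mu> < w \<bullet> x - r}\<close>. The qualification \<open>A x\<^sub>0 \<in> ri (dom g)\<close> rules out a vertical
  separator, so it normalizes to an affine minorant \<open>y \<mapsto> v \<bullet> y - c\<close> of \<open>g\<close> lying above
  \<open>w \<bullet> x - r\<close> along the range of \<open>A\<close>. Then \<open>(A\<^sup>T v - w) \<bullet> x\<close> is bounded below, forcing
  \<open>A\<^sup>T v = w\<close>, and \<open>g\<^sup>*(v) \<le> c \<le> r\<close>.\<close>

lemma transpose_mult_vec_inner:
  fixes A :: "real^'n^'m"
  shows "(transpose A *v v) \<bullet> x = v \<bullet> (A *v x)"
  by (metis dot_lmul_matrix transpose_transpose vector_transpose_matrix)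

lemma affine_bounded_below_slope_eq_0:
  fixes k m b :: real
  assumes "\<And>c. b \<le> c * k + m"
  shows "k = 0"
proof (rule ccontr)
  assume "k \<noteq> 0"
  have "b \<le> ((b - m - 1) / k) * k + m" by (rule assms)
  also have "\<dots> = b - 1" using \<open>k \<noteq> 0\<close> by simp
  finally show False by simp
qed

lemma inner_bounded_below_eq_0:
  fixes d :: "'a::real_inner"
  assumes "\<And>x. m \<le> d \<bullet> x"
  shows "d = 0"
proof -
  have "d \<bullet> d = 0"
  proof (rule affine_bounded_below_slope_eq_0)
    fix c
    show "m \<le> c * (d \<bullet> d) + 0" using assms[of "c *\<^sub>R d"] by simp
  qed
  then show ?thesis by simp
qed

lemma nearly_convex_set_separating_hyperplane:
  fixes S D :: "'a::euclidean_space set"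
  assumes "nearly_convex_set S" "S \<noteq> {}" "convex D" "D \<noteq> {}" "S \<inter> D = {}"
  obtains a b where "a \<noteq> 0" "\<And>p. p \<in> S \<Longrightarrow> a \<bullet> p \<le> b" "\<And>p. p \<in> D \<Longrightarrow> b \<le> a \<bullet> p"
proof -
  obtain C where C: "convex C" "C \<subseteq> S" "S \<subseteq> closure C"
    using assms(1) unfolding nearly_convex_set_def by blast
  have "C \<noteq> {}" "C \<inter> D = {}" using assms(2,5) C(2,3) by auto
  then obtain a b where ab: "a \<noteq> 0" "\<forall>p\<in>C. a \<bullet> p \<le> b" "\<forall>p\<in>D. b \<le> a \<bullet> p"
    using separating_hyperplane_sets[OF C(1) assms(3)] assms(4) by blast
  have "closure C \<subseteq> {p. a \<bullet> p \<le> b}"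
    using ab(2) by (intro closure_minimal) (auto simp: closed_halfspace_le)
  with that ab C(3) show thesis by blast
qed

lemma inner_eq_0_if_nonpos_and_zero_at_ri:
  fixes S :: "'a::real_inner set"
  assumes x0: "x0 \<in> ri S" and a_x0: "a \<bullet> x0 = 0"
    and nonpos: "\<And>y. y \<in> S \<Longrightarrow> a \<bullet> y \<le> 0" and y: "y \<in> S"
  shows "a \<bullet> y = 0"
proof -
  obtain \<delta> where \<delta>: "\<delta> > 0" "ball x0 \<delta> \<inter> affine hull S \<subseteq> S" and "x0 \<in> S"
    using x0 unfolding ri_def by auto
  define t where "t = \<delta> / (2 * (norm (y - x0) + 1))"
  have "norm (y - x0) + 1 > 0" by (simp add: add_nonneg_pos)
  then have t: "t > 0" "t * (norm (y - x0) + 1) = \<delta> / 2"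
    using \<delta>(1) by (simp_all add: t_def field_simps)
  \<comment> \<open>\<open>p\<close> continues the segment from \<open>y\<close> through \<open>x0\<close> slightly beyond \<open>x0\<close>, staying in \<open>S\<close>\<close>
  define p where "p = (1 + t) *\<^sub>R x0 + (- t) *\<^sub>R y"
  have "p \<in> affine hull S"
    unfolding p_def by (rule mem_affine[OF affine_affine_hull]) (use y \<open>x0 \<in> S\<close> hull_inc in auto)
  moreover have "dist x0 p = t * norm (y - x0)"
    unfolding p_def dist_norm using t(1)
    by (simp add: algebra_simps norm_minus_commute flip: scaleR_diff_right)
  then have "dist x0 p < \<delta>"
    using t \<delta>(1) unfolding distrib_left by linarith
  ultimately have "a \<bullet> p \<le> 0" using \<delta>(2) nonpos by auto
  then have "t * (a \<bullet> y) \<ge> 0" using a_x0 by (simp add: p_def inner_diff_right)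
  then show ?thesis using t(1) nonpos[OF y] by (simp add: zero_le_mult_iff)
qed

lemma vertical_separator_orthogonal:
  fixes A :: "real^'n^'m"
  assumes x0: "A *v x0 \<in> ri S"
    and sep_S: "\<And>y. y \<in> S \<Longrightarrow> a \<bullet> y \<le> b" and sep_range: "\<And>x. b \<le> a \<bullet> (A *v x)"
  shows "transpose A *v a = 0" and "\<And>y. y \<in> S \<Longrightarrow> a \<bullet> y = 0"
proof -
  show "transpose A *v a = 0"
  proof (rule inner_bounded_below_eq_0)
    show "b \<le> (transpose A *v a) \<bullet> x" for x
      using sep_range[of x] by (simp only: transpose_mult_vec_inner)
  qed
  then have "a \<bullet> (A *v x) = 0" for x by (metis inner_zero_left transpose_mult_vec_inner)
  with sep_range have "b \<le> 0" by metis
  with sep_S have "a \<bullet> y \<le> 0" if "y \<in> S" for y using that by force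
  then show "a \<bullet> y = 0" if "y \<in> S" for y
    using inner_eq_0_if_nonpos_and_zero_at_ri[OF x0] \<open>a \<bullet> (A *v x0) = 0\<close> that by blast
qed

lemma vertical_separator_eq_0:
  fixes A :: "real^'n^'m"
  assumes x0: "A *v x0 \<in> ri S" and sep_S: "\<And>y. y \<in> S \<Longrightarrow> a \<bullet> y \<le> b"
    and sep: "\<And>x z. transpose A *v z = 0 \<Longrightarrow> (\<forall>y\<in>S. z \<bullet> y = 0) \<Longrightarrow> b \<le> a \<bullet> (A *v x + z)"
  shows "a = 0"
proof -
  have "b \<le> a \<bullet> (A *v x)" for x using sep[of 0 x] by simp
  then have tA: "transpose A *v a = 0" and "\<forall>y\<in>S. a \<bullet> y = 0"
    using vertical_separator_orthogonal[OF x0 sep_S] by blast+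
  have "a \<bullet> a = 0"
  proof (rule affine_bounded_below_slope_eq_0)
    fix c
    have "transpose A *v (c *\<^sub>R a) = 0"
      using tA by (simp del: transpose_matrix_vector add: linear_scale[OF matrix_vector_mul_linear])
    with sep[of "c *\<^sub>R a" 0] \<open>\<forall>y\<in>S. a \<bullet> y = 0\<close> show "b \<le> c * (a \<bullet> a) + 0" by simp
  qed
  then show ?thesis by simp
qed

lemma convex_strict_hypograph_plus_subspace:
  fixes f :: "'a::real_inner \<Rightarrow> 'b::real_vector"
  assumes "linear f" "subspace Z"
  shows "convex {(f x + z, \<mu>) | x z \<mu>. z \<in> Z \<and> \<mu> < w \<bullet> x - r}"
proof (unfold convex_def, intro ballI allI impI)
  fix p q and u v :: real
  assume "p \<in> {(f x + z, \<mu>) | x z \<mu>. z \<in> Z \<and> \<mu> < w \<bullet> x - r}"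
    and "q \<in> {(f x + z, \<mu>) | x z \<mu>. z \<in> Z \<and> \<mu> < w \<bullet> x - r}"
    and uv: "0 \<le> u" "0 \<le> v" "u + v = 1"
  then obtain x1 z1 \<mu>1 x2 z2 \<mu>2 where
    p: "p = (f x1 + z1, \<mu>1)" "z1 \<in> Z" "\<mu>1 - w \<bullet> x1 < - r" and
    q: "q = (f x2 + z2, \<mu>2)" "z2 \<in> Z" "\<mu>2 - w \<bullet> x2 < - r"
    by auto
  have "u * (\<mu>1 - w \<bullet> x1) + v * (\<mu>2 - w \<bullet> x2) < - r"
    using convex_bound_lt[OF p(3) q(3) uv] .
  then have "u * \<mu>1 + v * \<mu>2 < w \<bullet> (u *\<^sub>R x1 + v *\<^sub>R x2) - r"
    by (simp add: inner_add_right algebra_simps)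
  moreover have "u *\<^sub>R z1 + v *\<^sub>R z2 \<in> Z"
    using assms(2) p(2) q(2) by (simp add: subspace_add subspace_scale)
  moreover have "u *\<^sub>R p + v *\<^sub>R q = (f (u *\<^sub>R x1 + v *\<^sub>R x2) + (u *\<^sub>R z1 + v *\<^sub>R z2), u * \<mu>1 + v * \<mu>2)"
    using p(1) q(1) assms(1) by (simp add: linear_add linear_scale algebra_simps)
  ultimately show "u *\<^sub>R p + v *\<^sub>R q \<in> {(f x + z, \<mu>) | x z \<mu>. z \<in> Z \<and> \<mu> < w \<bullet> x - r}"
    by blast
qed

lemma fconj_comp_le_fconj:
  fixes g :: "real^'m \<Rightarrow> ereal" and A :: "real^'n^'m"
  assumes "transpose A *v v = w"
  shows "fconj (\<lambda>x. g (A *v x)) w \<le> fconj g v"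
  unfolding fconj_def
proof (rule SUP_least)
  fix x
  have "ereal (w \<bullet> x) - g (A *v x) = ereal (v \<bullet> (A *v x)) - g (A *v x)"
    using assms transpose_mult_vec_inner[of A v x] by simp
  also have "\<dots> \<le> (SUP y. ereal (v \<bullet> y) - g y)" by (rule SUP_upper) simp
  finally show "ereal (w \<bullet> x) - g (A *v x) \<le> (SUP y. ereal (v \<bullet> y) - g y)" .
qed

lemma fconj_neq_MInf:
  assumes "x \<in> edom f"
  shows "fconj f w \<noteq> -\<infinity>"
proof -
  have "ereal (w \<bullet> x) - f x \<le> fconj f w" unfolding fconj_def by (rule SUP_upper) simp
  moreover have "ereal (w \<bullet> x) - f x \<noteq> -\<infinity>" using assms by (cases "f x") (auto simp: edom_def)
  ultimately show ?thesis by auto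
qed

lemma epi_separator_slope_nonpos:
  assumes "y \<in> edom g" and sep: "\<And>\<mu>. g y \<le> ereal \<mu> \<Longrightarrow> a \<bullet> y + \<beta> * \<mu> \<le> b"
  shows "\<beta> \<le> 0"
proof (rule ccontr)
  assume "\<not> \<beta> \<le> 0"
  obtain R where R: "g y \<le> ereal R" using assms(1) unfolding edom_def by (cases "g y") auto
  define \<mu> where "\<mu> = max R ((b - a \<bullet> y + 1) / \<beta>)"
  have "g y \<le> ereal \<mu>" using R unfolding \<mu>_def by (auto intro: order_trans)
  moreover have "(b - a \<bullet> y + 1) / \<beta> \<le> \<mu>" unfolding \<mu>_def by simp
  then have "b - a \<bullet> y + 1 \<le> \<beta> * \<mu>"
    using \<open>\<not> \<beta> \<le> 0\<close> by (simp add: pos_divide_le_eq mult.commute)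
  ultimately show False using sep by fastforce
qed

text \<open>The directions orthogonal to both \<open>edom g\<close> and the range of \<open>A\<close> are added to the
  strict hypograph so that a vertical separator is forced to vanish.\<close>

lemma epi_separated_from_strict_hypograph:
  fixes g :: "real^'m \<Rightarrow> ereal" and A :: "real^'n^'m"
  assumes nc: "nearly_convex_fun g" and "edom g \<noteq> {}"
    and minorant: "\<And>x \<mu>. g (A *v x) \<le> ereal \<mu> \<Longrightarrow> w \<bullet> x - \<mu> \<le> r"
  obtains a \<beta> b where "(a, \<beta>) \<noteq> 0"
    and "\<And>y \<mu>. g y \<le> ereal \<mu> \<Longrightarrow> a \<bullet> y + \<beta> * \<mu> \<le> b"
    and "\<And>x z \<mu>. transpose A *v z = 0 \<Longrightarrow> (\<forall>y\<in>edom g. z \<bullet> y = 0) \<Longrightarrow> \<mu> < w \<bullet> x - r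
           \<Longrightarrow> b \<le> a \<bullet> (A *v x + z) + \<beta> * \<mu>"
proof -
  define Z where "Z = {z. transpose A *v z = 0 \<and> (\<forall>y\<in>edom g. z \<bullet> y = 0)}"
  define D where "D = {(A *v x + z, \<mu>) | x z \<mu>. z \<in> Z \<and> \<mu> < w \<bullet> x - r}"
  have "subspace Z"
    unfolding subspace_def Z_def
    by (auto simp del: transpose_matrix_vector
        simp: matrix_vector_right_distrib inner_add_left linear_scale[OF matrix_vector_mul_linear])
  then have "convex D"
    unfolding D_def by (rule convex_strict_hypograph_plus_subspace[OF matrix_vector_mul_linear])
  have "(A *v 0 + 0, - r - 1) \<in> D" unfolding D_def Z_def by fastforce
  then have "D \<noteq> {}" by blast
  obtain y1 where "y1 \<in> edom g" using \<open>edom g \<noteq> {}\<close> by blast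
  then obtain R where "g y1 \<le> ereal R" unfolding edom_def by (cases "g y1") auto
  then have "epi g \<noteq> {}" unfolding epi_def by blast
  have "epi g \<inter> D = {}"
  proof (rule ccontr)
    assume "epi g \<inter> D \<noteq> {}"
    then obtain x z \<mu> where z: "z \<in> Z" "\<mu> < w \<bullet> x - r" and le: "g (A *v x + z) \<le> ereal \<mu>"
      unfolding D_def epi_def by blast
    then have "A *v x + z \<in> edom g" unfolding edom_def by (auto intro: le_less_trans)
    then have "z \<bullet> (A *v x + z) = 0" "z \<bullet> (A *v x) = 0"
      using z(1) transpose_mult_vec_inner[of A z x] unfolding Z_def by auto
    then have "z = 0" by (simp add: inner_add_right)
    with le z(2) minorant show False by fastforce
  qed
  obtain ab b where "ab \<noteq> 0" and sep_epi: "\<And>p. p \<in> epi g \<Longrightarrow> ab \<bullet> p \<le> b"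
    and sep_D: "\<And>p. p \<in> D \<Longrightarrow> b \<le> ab \<bullet> p"
    using nearly_convex_set_separating_hyperplane[OF nc[unfolded nearly_convex_fun_def]
        \<open>epi g \<noteq> {}\<close> \<open>convex D\<close> \<open>D \<noteq> {}\<close> \<open>epi g \<inter> D = {}\<close>] by blast
  obtain a \<beta> where ab: "ab = (a, \<beta>)" by fastforce
  show thesis
  proof
    show "(a, \<beta>) \<noteq> 0" using \<open>ab \<noteq> 0\<close> ab by simp
    show "a \<bullet> y + \<beta> * \<mu> \<le> b" if "g y \<le> ereal \<mu>" for y \<mu>
      using sep_epi[of "(y, \<mu>)"] that by (simp add: ab epi_def inner_Pair)
    show "b \<le> a \<bullet> (A *v x + z) + \<beta> * \<mu>"
      if "transpose A *v z = 0" "\<forall>y\<in>edom g. z \<bullet> y = 0" "\<mu> < w \<bullet> x - r" for x z \<mu>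
      using sep_D[of "(A *v x + z, \<mu>)"] that by (auto simp: ab D_def Z_def inner_Pair)
  qed
qed

lemma affine_minorant_of_comp_lifts:
  fixes g :: "real^'m \<Rightarrow> ereal" and A :: "real^'n^'m"
  assumes proper: "proper_fun g" and nc: "nearly_convex_fun g"
    and x0: "A *v x0 \<in> ri (edom g)"
    and minorant: "\<And>x \<mu>. g (A *v x) \<le> ereal \<mu> \<Longrightarrow> w \<bullet> x - \<mu> \<le> r"
  obtains v c where "\<And>y \<mu>. g y \<le> ereal \<mu> \<Longrightarrow> v \<bullet> y - \<mu> \<le> c"
    and "\<And>x. w \<bullet> x - r \<le> v \<bullet> (A *v x) - c"
proof -
  have g_finite: "g y \<noteq> -\<infinity>" for y using proper unfolding proper_fun_def by auto
  obtain y1 where y1: "y1 \<in> edom g" using proper unfolding proper_fun_def by auto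
  obtain a \<beta> b where "(a, \<beta>) \<noteq> 0"
    and sep_epi: "\<And>y \<mu>. g y \<le> ereal \<mu> \<Longrightarrow> a \<bullet> y + \<beta> * \<mu> \<le> b"
    and sep_hyp: "\<And>x z \<mu>. transpose A *v z = 0 \<Longrightarrow> (\<forall>y\<in>edom g. z \<bullet> y = 0) \<Longrightarrow> \<mu> < w \<bullet> x - r
                    \<Longrightarrow> b \<le> a \<bullet> (A *v x + z) + \<beta> * \<mu>"
    using epi_separated_from_strict_hypograph[OF nc _ minorant] y1 by blast
  have "\<beta> \<noteq> 0"
  proof
    assume "\<beta> = 0"
    have "a = 0"
    proof (rule vertical_separator_eq_0[OF x0])
      show "a \<bullet> y \<le> b" if "y \<in> edom g" for y
        using that g_finite[of y] sep_epi[of y "real_of_ereal (g y)"] \<open>\<beta> = 0\<close>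
        by (cases "g y") (auto simp: edom_def)
      show "b \<le> a \<bullet> (A *v x + z)" if "transpose A *v z = 0" "\<forall>y\<in>edom g. z \<bullet> y = 0" for x z
        using sep_hyp[OF that, of "w \<bullet> x - r - 1"] \<open>\<beta> = 0\<close> by simp
    qed
    with \<open>(a, \<beta>) \<noteq> 0\<close> \<open>\<beta> = 0\<close> show False by (simp add: zero_prod_def)
  qed
  moreover have "\<beta> \<le> 0" using epi_separator_slope_nonpos[OF y1 sep_epi] .
  ultimately have "\<beta> < 0" by simp
  define v where "v = (-1 / \<beta>) *\<^sub>R a"
  define c where "c = b / - \<beta>"
  have a_eq: "a = (- \<beta>) *\<^sub>R v" and b_eq: "b = (- \<beta>) * c"
    using \<open>\<beta> < 0\<close> by (simp_all add: v_def c_def)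
  show thesis
  proof
    show "v \<bullet> y - \<mu> \<le> c" if "g y \<le> ereal \<mu>" for y \<mu>
    proof -
      have "(- \<beta>) * (v \<bullet> y - \<mu>) \<le> (- \<beta>) * c"
        using sep_epi[OF that] by (simp add: a_eq b_eq algebra_simps)
      then show ?thesis using \<open>\<beta> < 0\<close> by simp
    qed
    show "w \<bullet> x - r \<le> v \<bullet> (A *v x) - c" for x
    proof (rule dense_le)
      fix \<mu>
      assume "\<mu> < w \<bullet> x - r"
      then have "(- \<beta>) * \<mu> \<le> (- \<beta>) * (v \<bullet> (A *v x) - c)"
        using sep_hyp[of 0 \<mu> x] by (simp add: a_eq b_eq algebra_simps)
      then show "\<mu> \<le> v \<bullet> (A *v x) - c" using \<open>\<beta> < 0\<close> by simp
    qed
  qed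
qed

lemma fconj_comp_attained:
  fixes g :: "real^'m \<Rightarrow> ereal" and A :: "real^'n^'m"
  assumes proper: "proper_fun g" and nc: "nearly_convex_fun g"
    and x0: "A *v x0 \<in> ri (edom g)"
    and r: "fconj (\<lambda>x. g (A *v x)) w = ereal r"
  obtains v where "transpose A *v v = w" "fconj g v = ereal r"
proof -
  have "w \<bullet> x - \<mu> \<le> r" if "g (A *v x) \<le> ereal \<mu>" for x \<mu>
  proof -
    have "ereal (w \<bullet> x - \<mu>) \<le> ereal (w \<bullet> x) - g (A *v x)"
      using ereal_minus_mono[OF order_refl[of "ereal (w \<bullet> x)"] that] by simp
    also have "\<dots> \<le> ereal r" unfolding r[symmetric] fconj_def by (rule SUP_upper) simp
    finally show ?thesis by simp
  qed
  then obtain v c where v_epi: "\<And>y \<mu>. g y \<le> ereal \<mu> \<Longrightarrow> v \<bullet> y - \<mu> \<le> c"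
    and v_hyp: "\<And>x. w \<bullet> x - r \<le> v \<bullet> (A *v x) - c"
    using affine_minorant_of_comp_lifts[OF proper nc x0] by blast
  have "transpose A *v v - w = 0"
  proof (rule inner_bounded_below_eq_0)
    show "c - r \<le> (transpose A *v v - w) \<bullet> x" for x
      using v_hyp[of x] by (simp only: inner_diff_left transpose_mult_vec_inner)
  qed
  then have tA: "transpose A *v v = w" by simp
  have "c \<le> r" using v_hyp[of 0] by simp
  have "fconj g v \<le> ereal r"
    unfolding fconj_def
  proof (rule SUP_least)
    show "ereal (v \<bullet> y) - g y \<le> ereal r" for y
    proof (cases "g y")
      case (real \<mu>)
      then show ?thesis using v_epi[of y \<mu>] \<open>c \<le> r\<close> by simp
    next
      case MInf
      then show ?thesis using proper unfolding proper_fun_def by (metis less_irrefl)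
    qed simp
  qed
  moreover have "ereal r \<le> fconj g v" using fconj_comp_le_fconj[OF tA, of g] r by simp
  ultimately show thesis using that tA by simp
qed

theorem theorem6p7:
  fixes g :: "real^'p \<Rightarrow> ereal" and A :: "real^'n^'p"
  assumes "proper_fun g" and "nearly_convex_fun g"
    and "range (\<lambda>x. A *v x) \<inter> ri (edom g) \<noteq> {}"
  shows "(\<forall>w. fconj (\<lambda>x. g (A *v x)) w = (INF v\<in>{v. transpose A *v v = w}. fconj g v))
    \<and> (\<forall>w. fconj (\<lambda>x. g (A *v x)) w \<noteq> \<infinity> \<and> fconj (\<lambda>x. g (A *v x)) w \<noteq> -\<infinity> \<longrightarrow>
           (\<exists>v. transpose A *v v = w \<and> fconj (\<lambda>x. g (A *v x)) w = fconj g v))"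
proof -
  let ?h = "fconj (\<lambda>x. g (A *v x))"
  obtain x0 where x0: "A *v x0 \<in> ri (edom g)" using assms(3) by auto
  have attained: "\<exists>v. transpose A *v v = w \<and> ?h w = fconj g v"
    if finite: "?h w \<noteq> \<infinity>" "?h w \<noteq> -\<infinity>" for w
  proof -
    obtain r where "?h w = ereal r" using finite by (cases "?h w") auto
    then show ?thesis using fconj_comp_attained[OF assms(1,2) x0] by metis
  qed
  have "?h w = (INF v\<in>{v. transpose A *v v = w}. fconj g v)" for w
  proof (rule antisym)
    show "?h w \<le> (INF v\<in>{v. transpose A *v v = w}. fconj g v)"
      by (intro INF_greatest fconj_comp_le_fconj) simp
    have "x0 \<in> edom (\<lambda>x. g (A *v x))" using x0 by (simp add: ri_def edom_def)
    then show "(INF v\<in>{v. transpose A *v v = w}. fconj g v) \<le> ?h w"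
      using attained[of w] fconj_neq_MInf[of x0 _ w] by (cases "?h w = \<infinity>") (auto intro: INF_lower2)
  qed
  with attained show ?thesis by blast
qed

end
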